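(* Let $E\in M(m)$ be a real $m\times m$ matrix all of whose eigenvalues have positive real parts, and let $H\in M(n)$ be a real $n\times n$ matrix. Let $h:\mathbb{R}^m\to M(n,\mathbb{C})$ be a measurable function such that, for every $c>0$, $$h(c^{E}x)=c^{H/2}\,h(x)\,c^{H^*/2}\quad\text{for Lebesgue-a.e. } x\in\mathbb{R}^m$$ (the exceptional null set may depend on $c$). Then there exists an $(E,H)$-homogeneous function $\varphi:\mathbb{R}^m\setminus\{0\}\to M(n,\mathbb{C})$ such that $\varphi(x)=h(x)$ for Lebesgue-a.e. $x$.
   Context: For a square matrix $M$ and $c>0$, $c^{M}:=\sum_{k\ge0}(\log c)^kM^k/k!$. $A^*$ denotes the conjugate transpose. $M(n)$ is the space of real $n\times n$ matrices and $M(n,\mathbb{C})$ the space of complex $n\times n$ matrices. A function $\varphi:\mathbb{R}^m\to M(n,\mathbb{C})$ is called $(E,H)$-homogeneous if $\varphi(c^{E}x)=c^{H/2}\varphi(x)c^{H^*/2}$ for all $c>0$ and all $x\in\mathbb{R}^m\setminus\{0\}$. *)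

theory Defs
  imports "HOL-Analysis.Analysis"
begin

definition matpow :: "'a::comm_ring_1^'n^'n \<Rightarrow> nat \<Rightarrow> 'a^'n^'n" where
  "matpow M k = (((**) M) ^^ k) (mat 1)"

definition mat_cpow :: "real \<Rightarrow> real^'n^'n \<Rightarrow> real^'n^'n" where
  "mat_cpow c M = (\<Sum>k. ((ln c) ^ k / fact k) *\<^sub>R matpow M k)"

definition cmat :: "real^'m^'n \<Rightarrow> complex^'m^'n" where
  "cmat M = (\<chi> i j. complex_of_real (M $ i $ j))"

definition is_eigenvalue :: "real^'n^'n \<Rightarrow> complex \<Rightarrow> bool" where
  "is_eigenvalue M l \<longleftrightarrow> (\<exists>v::complex^'n. v \<noteq> 0 \<and> cmat M *v v = l *s v)"

text \<open>(E,H)-homogeneity on R^m minus the origin; H is real so H^* = transpose H.\<close>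
definition EH_homogeneous ::
  "real^'m^'m \<Rightarrow> real^'n^'n \<Rightarrow> (real^'m \<Rightarrow> complex^'n^'n) \<Rightarrow> bool" where
  "EH_homogeneous E H \<phi> \<longleftrightarrow>
     (\<forall>c>0. \<forall>x. x \<noteq> 0 \<longrightarrow>
        \<phi> (mat_cpow c E *v x) =
          cmat (mat_cpow c ((1/2) *\<^sub>R H)) ** \<phi> x ** cmat (mat_cpow c ((1/2) *\<^sub>R transpose H)))"

end

theory Submission imports Defs begin

text \<open>
Taking \<open>c = e^t\<close>, the hypothesis says that \<open>h\<close> is a.e. equivariant under the one-parameter
groups \<open>x \<mapsto> e^(tE) x\<close> and \<open>V \<mapsto> e^(tH/2) V e^(tH*/2)\<close>, for each fixed \<open>t\<close>. By Fubini, for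
a.e. \<open>x\<close> the equivariance identity then holds for a.e. \<open>t\<close>. Call \<open>v\<close> admissible at \<open>x\<close> if
\<open>h(e^(tE) x) = e^(tH/2) v e^(tH*/2)\<close> for a.e. \<open>t\<close>. Admissible values are unique, since the action
on matrices is invertible, and they are transported along orbits; so taking \<open>\<phi>(x)\<close> to be the
admissible value at \<open>x\<close> (and \<open>0\<close> on orbits without one) gives an exactly homogeneous function,
which equals \<open>h\<close> at every \<open>x\<close> where \<open>h(x)\<close> itself is admissible, i.e. almost everywhere.
\<close>

lemma matpow_0 [simp]: "matpow M 0 = mat 1"
  by (simp add: matpow_def)

lemma matpow_Suc: "matpow M (Suc k) = M ** matpow M k"
  by (simp add: matpow_def)

lemma matpow_add: "matpow M (a + b) = matpow M a ** matpow M b"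
  by (induction a) (simp_all add: matpow_Suc matrix_mul_assoc)

definition entry_bound :: "real^'n^'n \<Rightarrow> real" where
  "entry_bound M = 1 + (\<Sum>i\<in>UNIV. \<Sum>j\<in>UNIV. \<bar>M $ i $ j\<bar>)"

lemma entry_bound_ge_1: "1 \<le> entry_bound M"
  unfolding entry_bound_def by (simp add: sum_nonneg)

lemma row_sum_le_entry_bound: "(\<Sum>l\<in>UNIV. \<bar>M $ i $ l\<bar>) \<le> entry_bound M"
proof -
  have "(\<Sum>l\<in>UNIV. \<bar>M $ i $ l\<bar>) \<le> (\<Sum>i\<in>UNIV. \<Sum>j\<in>UNIV. \<bar>M $ i $ j\<bar>)"
    by (rule member_le_sum[where f = "\<lambda>i. \<Sum>j\<in>UNIV. \<bar>M $ i $ j\<bar>"]) (auto intro: sum_nonneg)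
  then show ?thesis
    unfolding entry_bound_def by simp
qed

lemma abs_matpow_entry_le: "\<bar>matpow M k $ i $ j\<bar> \<le> entry_bound M ^ k"
proof (induction k arbitrary: i j)
  case 0
  then show ?case by (simp add: mat_def)
next
  case (Suc k)
  have "\<bar>matpow M (Suc k) $ i $ j\<bar> = \<bar>\<Sum>l\<in>UNIV. M $ i $ l * matpow M k $ l $ j\<bar>"
    by (simp add: matpow_Suc matrix_matrix_mult_def)
  also have "\<dots> \<le> (\<Sum>l\<in>UNIV. \<bar>M $ i $ l\<bar> * entry_bound M ^ k)"
    by (rule order_trans[OF sum_abs]) (auto intro!: sum_mono mult_left_mono Suc simp: abs_mult)
  also have "\<dots> = (\<Sum>l\<in>UNIV. \<bar>M $ i $ l\<bar>) * entry_bound M ^ k"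
    by (simp add: sum_distrib_right)
  also have "\<dots> \<le> entry_bound M * entry_bound M ^ k"
    using entry_bound_ge_1[of M] by (intro mult_right_mono row_sum_le_entry_bound) auto
  finally show ?case by simp
qed

lemma summable_abs_exp_series_entry:
  fixes M :: "real^'n^'n"
  shows "summable (\<lambda>k. \<bar>t ^ k / fact k * matpow M k $ i $ j\<bar>)"
proof (rule summable_comparison_test[OF _ summable_exp[of "\<bar>t\<bar> * entry_bound M"]])
  have "\<bar>t ^ k / fact k * matpow M k $ i $ j\<bar> \<le> inverse (fact k) * (\<bar>t\<bar> * entry_bound M) ^ k" for k
  proof -
    have "\<bar>t ^ k / fact k * matpow M k $ i $ j\<bar> = inverse (fact k) * \<bar>t\<bar> ^ k * \<bar>matpow M k $ i $ j\<bar>"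
      by (simp add: abs_mult power_abs divide_inverse)
    also have "\<dots> \<le> inverse (fact k) * \<bar>t\<bar> ^ k * entry_bound M ^ k"
      by (intro mult_left_mono abs_matpow_entry_le) auto
    finally show ?thesis
      by (simp add: power_mult_distrib mult.assoc)
  qed
  then show "\<exists>N. \<forall>k\<ge>N. norm \<bar>t ^ k / fact k * matpow M k $ i $ j\<bar> \<le> inverse (fact k) * (\<bar>t\<bar> * entry_bound M) ^ k"
    by auto
qed

definition mat_exp :: "real^'n^'n \<Rightarrow> real \<Rightarrow> real^'n^'n" where
  "mat_exp M t = (\<Sum>k. (t ^ k / fact k) *\<^sub>R matpow M k)"

lemma mat_cpow_eq_mat_exp: "mat_cpow c M = mat_exp M (ln c)"
  by (simp add: mat_cpow_def mat_exp_def)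

lemma mat_exp_entry: "mat_exp M t $ i $ j = (\<Sum>k. t ^ k / fact k * matpow M k $ i $ j)"
proof -
  have partial_sums: "(\<lambda>n. \<Sum>k<n. (t ^ k / fact k) *\<^sub>R matpow M k) =
      (\<lambda>n. \<chi> i j. \<Sum>k<n. t ^ k / fact k * matpow M k $ i $ j)"
    by (auto simp: vec_eq_iff)
  have "(\<lambda>k. (t ^ k / fact k) *\<^sub>R matpow M k) sums (\<chi> i j. \<Sum>k. t ^ k / fact k * matpow M k $ i $ j)"
    unfolding sums_def partial_sums
    by (intro tendsto_vec_lambda summable_LIMSEQ[OF summable_rabs_cancel[OF summable_abs_exp_series_entry]])
  then show ?thesis
    unfolding mat_exp_def by (simp add: sums_unique[symmetric])
qed

lemma mat_exp_add: "mat_exp M (s + t) = mat_exp M s ** mat_exp M t"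
proof -
  define a where "a u i j k = u ^ k / fact k * matpow M k $ i $ j" for u i j k
  have summable_a: "summable (\<lambda>k. norm (a u i j k))" for u i j
    unfolding a_def real_norm_def by (rule summable_abs_exp_series_entry)
  have Cauchy_coefficient:
    "(\<Sum>l\<in>UNIV. \<Sum>m\<le>n. a s i l m * a t l j (n - m)) = (s + t) ^ n / fact n * matpow M n $ i $ j"
    for i j n
  proof -
    have "(\<Sum>l\<in>UNIV. \<Sum>m\<le>n. a s i l m * a t l j (n - m))
        = (\<Sum>m\<le>n. s ^ m / fact m * (t ^ (n - m) / fact (n - m)) *
            (\<Sum>l\<in>UNIV. matpow M m $ i $ l * matpow M (n - m) $ l $ j))"
      by (subst sum.swap) (simp add: a_def sum_distrib_left algebra_simps)
    also have "\<dots> = (\<Sum>m\<le>n. s ^ m / fact m * (t ^ (n - m) / fact (n - m))) * matpow M n $ i $ j"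
      unfolding sum_distrib_right
    proof (rule sum.cong[OF refl])
      fix m assume "m \<in> {..n}"
      then have "matpow M n = matpow M m ** matpow M (n - m)"
        by (simp flip: matpow_add)
      then show "s ^ m / fact m * (t ^ (n - m) / fact (n - m)) *
            (\<Sum>l\<in>UNIV. matpow M m $ i $ l * matpow M (n - m) $ l $ j)
          = s ^ m / fact m * (t ^ (n - m) / fact (n - m)) * matpow M n $ i $ j"
        by (simp add: matrix_matrix_mult_def)
    qed
    also have "\<dots> = (s + t) ^ n / fact n * matpow M n $ i $ j"
      using exp_series_add_commuting[of s t n] by (simp add: divide_inverse mult.commute)
    finally show ?thesis .
  qed
  have "(mat_exp M s ** mat_exp M t) $ i $ j = mat_exp M (s + t) $ i $ j" for i j
  proof -
    have "(mat_exp M s ** mat_exp M t) $ i $ j = (\<Sum>l\<in>UNIV. (\<Sum>k. a s i l k) * (\<Sum>k. a t l j k))"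
      by (simp add: matrix_matrix_mult_def mat_exp_entry a_def)
    also have "\<dots> = (\<Sum>l\<in>UNIV. \<Sum>n. \<Sum>m\<le>n. a s i l m * a t l j (n - m))"
      by (intro sum.cong refl Cauchy_product summable_a)
    also have "\<dots> = (\<Sum>n. \<Sum>l\<in>UNIV. \<Sum>m\<le>n. a s i l m * a t l j (n - m))"
      by (rule suminf_sum[symmetric]) (intro summable_Cauchy_product summable_a)
    also have "\<dots> = mat_exp M (s + t) $ i $ j"
      by (simp add: Cauchy_coefficient mat_exp_entry)
    finally show ?thesis .
  qed
  then show ?thesis
    by (simp add: vec_eq_iff)
qed

lemma mat_exp_0: "mat_exp M 0 = mat 1"
proof -
  have "(\<lambda>k. ((0::real) ^ k / fact k) *\<^sub>R matpow M k) = (\<lambda>k. if k = 0 then mat 1 else 0)"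
    by (auto simp: power_0_left)
  then have "(\<lambda>k. ((0::real) ^ k / fact k) *\<^sub>R matpow M k) sums mat 1"
    using sums_single[of 0 "\<lambda>_. mat 1"] by simp
  then show ?thesis
    unfolding mat_exp_def by (rule sums_unique[symmetric])
qed

lemma mat_exp_minus_mult: "mat_exp M (- t) ** mat_exp M t = mat 1"
  by (simp flip: mat_exp_add add: mat_exp_0)

lemma continuous_on_mat_exp_entry [continuous_intros]:
  assumes "continuous_on S f"
  shows "continuous_on S (\<lambda>x. mat_exp M (f x) $ i $ j)"
proof -
  let ?c = "\<lambda>k. matpow M k $ i $ j / fact k"
  have "isCont (\<lambda>t. \<Sum>k. ?c k * t ^ k) t" for t
  proof (rule isCont_powser)
    show "summable (\<lambda>k. ?c k * (\<bar>t\<bar> + 1) ^ k)"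
      using summable_rabs_cancel[OF summable_abs_exp_series_entry[of "\<bar>t\<bar> + 1" M i j]]
      by (simp add: field_simps)
  qed simp
  then have "continuous_on UNIV (\<lambda>t. mat_exp M t $ i $ j)"
    by (simp add: continuous_on_eq_continuous_at mat_exp_entry field_simps)
  from continuous_on_compose2[OF this assms] show ?thesis
    by simp
qed

lemma cmat_mult: "cmat (A ** B) = cmat A ** cmat B"
  by (simp add: vec_eq_iff cmat_def matrix_matrix_mult_def)

lemma cmat_mat_1: "cmat (mat 1) = mat 1"
  by (simp add: vec_eq_iff cmat_def mat_def)

definition two_sided_mat_exp ::
  "real^'n^'n \<Rightarrow> real^'n^'n \<Rightarrow> real \<Rightarrow> complex^'n^'n \<Rightarrow> complex^'n^'n" where
  "two_sided_mat_exp K L t V = cmat (mat_exp K t) ** V ** cmat (mat_exp L t)"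

lemma two_sided_mat_exp_add:
  "two_sided_mat_exp K L s (two_sided_mat_exp K L t V) = two_sided_mat_exp K L (s + t) V"
proof -
  have "mat_exp L (s + t) = mat_exp L t ** mat_exp L s"
    by (metis mat_exp_add add.commute)
  then show ?thesis
    by (simp add: two_sided_mat_exp_def mat_exp_add cmat_mult matrix_mul_assoc)
qed

lemma two_sided_mat_exp_0: "two_sided_mat_exp K L 0 V = V"
  by (simp add: two_sided_mat_exp_def mat_exp_0 cmat_mat_1)

lemma two_sided_mat_exp_zero: "two_sided_mat_exp K L t 0 = 0"
  by (simp add: two_sided_mat_exp_def vec_eq_iff matrix_matrix_mult_def)

lemma continuous_on_two_sided_mat_exp:
  "continuous_on UNIV (\<lambda>z. two_sided_mat_exp K L (fst z) (snd z))"
  unfolding two_sided_mat_exp_def matrix_matrix_mult_def cmat_def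
  by (simp; intro continuous_intros)

lemma continuous_on_mat_exp_mult_vec:
  "continuous_on UNIV (\<lambda>z. mat_exp M (fst z) *v snd z)"
  unfolding matrix_vector_mult_def by (intro continuous_intros)

lemma completion_ex_borel_measurable_euclidean:
  fixes g :: "'a \<Rightarrow> 'b::euclidean_space"
  assumes "g \<in> borel_measurable (completion M)"
  shows "\<exists>g'\<in>borel_measurable M. AE x in M. g x = g' x"
proof -
  have "\<forall>b::'b. \<exists>f. f \<in> borel_measurable M \<and> (AE x in M. g x \<bullet> b = f x)"
    using completion_ex_borel_measurable_real[OF borel_measurable_inner[OF assms borel_measurable_const]]
    by blast
  then obtain f where f_meas: "\<And>b. f b \<in> borel_measurable M"
    and f_AE: "\<And>b. AE x in M. g x \<bullet> b = f b x"
    by metis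
  show ?thesis
  proof
    show "(\<lambda>x. \<Sum>b\<in>Basis. f b x *\<^sub>R b) \<in> borel_measurable M"
      by (intro borel_measurable_sum borel_measurable_scaleR f_meas borel_measurable_const)
    have "AE x in M. \<forall>b\<in>Basis. g x \<bullet> b = f b x"
      by (rule AE_finite_allI[OF finite_Basis f_AE])
    then show "AE x in M. g x = (\<Sum>b\<in>Basis. f b x *\<^sub>R b)"
    proof eventually_elim
      case (elim x)
      have "g x = (\<Sum>b\<in>Basis. (g x \<bullet> b) *\<^sub>R b)"
        by (simp only: euclidean_representation)
      also have "\<dots> = (\<Sum>b\<in>Basis. f b x *\<^sub>R b)"
        using elim by (intro sum.cong) auto
      finally show ?case .
    qed
  qed
qed

lemma AE_lebesgue_linear_preimage:
  fixes B C :: "real^'m^'m"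
  assumes "AE y in lebesgue. P y" and "B ** C = mat 1"
  shows "AE x in lebesgue. P (C *v x)"
proof -
  from assms(1) obtain N where N: "N \<in> null_sets lebesgue" "{y \<in> space lebesgue. \<not> P y} \<subseteq> N"
    by (auto simp: eventually_ae_filter)
  have "negligible ((\<lambda>x. B *v x) ` N)"
    using N(1) unfolding negligible_iff_null_sets[symmetric]
    by (rule negligible_differentiable_image_negligible[OF order_refl])
       (intro linear_imp_differentiable_on matrix_vector_mul_linear)
  moreover have "{x \<in> space lebesgue. \<not> P (C *v x)} \<subseteq> (\<lambda>x. B *v x) ` N"
  proof
    fix x assume "x \<in> {x \<in> space lebesgue. \<not> P (C *v x)}"
    then have "C *v x \<in> N" using N(2) by auto
    moreover have "x = B *v (C *v x)" by (simp add: matrix_vector_mul_assoc assms(2))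
    ultimately show "x \<in> (\<lambda>x. B *v x) ` N" by blast
  qed
  ultimately show ?thesis
    by (intro AE_I') (auto simp: negligible_iff_null_sets)
qed

lemma AE_lborel_linear_equivariance_transfer:
  fixes B C :: "real^'m^'m"
  assumes "B ** C = mat 1"
    and h_h': "AE x in lborel. h x = h' x"
    and "AE x in lebesgue. h (C *v x) = F (h x)"
  shows "AE x in lborel. h' (C *v x) = F (h' x)"
proof -
  have "AE x in lebesgue. h (C *v x) = h' (C *v x)"
    by (rule AE_lebesgue_linear_preimage[OF AE_completion[OF h_h'] assms(1)])
  with assms(3) AE_completion[OF h_h'] have "AE x in lebesgue. h' (C *v x) = F (h' x)"
    by eventually_elim auto
  then show ?thesis
    by (simp add: AE_completion_iff)
qed

lemma AE_lborel_translate: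
  fixes c :: "'a::euclidean_space"
  assumes "AE x in lborel. P x"
  shows "AE x in lborel. P (c + x)"
proof -
  have "AE x in distr lborel borel ((+) c). P x"
    by (subst lborel_distr_plus) (rule assms)
  then show ?thesis
    by (rule AE_distrD[rotated]) simp
qed

lemma AE_lborel_AE_equivariant:
  fixes G :: "real \<Rightarrow> 'a::euclidean_space \<Rightarrow> 'a"
    and A :: "real \<Rightarrow> 'b::{second_countable_topology, t2_space} \<Rightarrow> 'b"
  assumes G_meas: "(\<lambda>z. G (fst z) (snd z)) \<in> borel_measurable borel"
    and A_meas: "(\<lambda>z. A (fst z) (snd z)) \<in> borel_measurable borel"
    and f_meas: "f \<in> borel_measurable borel"
    and f_equivariant: "\<And>t. AE x in lborel. f (G t x) = A t (f x)"
  shows "AE x in lborel. AE t in lborel. f (G t x) = A t (f x)"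
proof -
  have "(\<lambda>z. f (G (fst z) (snd z))) \<in> borel_measurable (lborel \<Otimes>\<^sub>M lborel)"
    unfolding lborel_prod measurable_lborel2 by (rule measurable_compose[OF G_meas f_meas])
  moreover have "(\<lambda>z. A (fst z) (f (snd z))) \<in> borel_measurable (lborel \<Otimes>\<^sub>M lborel)"
  proof -
    have "(\<lambda>z::real \<times> 'a. snd z) \<in> borel_measurable borel"
      by (intro borel_measurable_continuous_onI continuous_intros)
    then have "(\<lambda>z::real \<times> 'a. (fst z, f (snd z))) \<in> borel_measurable borel"
      by (intro borel_measurable_Pair measurable_compose[OF _ f_meas])
         (auto intro!: borel_measurable_continuous_onI continuous_on_fst)
    from measurable_compose[OF this A_meas] show ?thesis
      unfolding lborel_prod measurable_lborel2 by simp
  qed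
  ultimately have "{z \<in> space (lborel \<Otimes>\<^sub>M lborel). f (G (fst z) (snd z)) = A (fst z) (f (snd z))}
      \<in> sets (lborel \<Otimes>\<^sub>M lborel)"
    by (rule measurable_equality_set)
  moreover have "AE t in lborel. AE x in lborel. f (G t x) = A t (f x)"
    using f_equivariant by simp
  ultimately show ?thesis
    by (rule lborel_pair.AE_commute[THEN iffD1])
qed

lemma equivariant_version_of_AE_equivariant:
  fixes G :: "real \<Rightarrow> 'a \<Rightarrow> 'a" and A :: "real \<Rightarrow> 'b::zero \<Rightarrow> 'b"
  assumes G_add: "\<And>s t x. G s (G t x) = G (s + t) x"
    and G_0: "\<And>x. G 0 x = x"
    and A_add: "\<And>s t v. A s (A t v) = A (s + t) v"
    and A_0: "\<And>v. A 0 v = v"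
    and A_fixes_0: "\<And>t. A t 0 = 0"
    and f_equivariant: "AE x in M. AE t in lborel. f (G t x) = A t (f x)"
  shows "\<exists>\<phi>. (\<forall>t x. \<phi> (G t x) = A t (\<phi> x)) \<and> (AE x in M. \<phi> x = f x)"
proof -
  define admissible where "admissible x = {v. AE t in lborel. f (G t x) = A t v}" for x
  have admissible_unique: "v = w" if "v \<in> admissible x" "w \<in> admissible x" for x v w
  proof -
    have "AE t in lborel. A t v = A t w"
      using that unfolding admissible_def mem_Collect_eq by eventually_elim simp
    moreover have "ae_filter (lborel :: real measure) \<noteq> bot"
      by (simp add: ae_filter_eq_bot_iff)
    ultimately obtain t where "A t v = A t w"
      using eventually_happens' by blast
    then have "A (- t) (A t v) = A (- t) (A t w)"
      by simp
    then show ?thesis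
      by (simp add: A_add A_0)
  qed
  have admissible_transport: "A s v \<in> admissible (G s x)" if "v \<in> admissible x" for s v x
  proof -
    have "AE t in lborel. f (G (s + t) x) = A (s + t) v"
      using that unfolding admissible_def mem_Collect_eq by (rule AE_lborel_translate)
    then show ?thesis
      unfolding admissible_def by (simp add: G_add A_add add.commute)
  qed
  define \<phi> where "\<phi> x = (if admissible x = {} then 0 else THE v. v \<in> admissible x)" for x
  have \<phi>_eq: "\<phi> x = v" if "v \<in> admissible x" for x v
    using that admissible_unique unfolding \<phi>_def by (auto intro!: the_equality)
  have "\<phi> (G t x) = A t (\<phi> x)" for t x
  proof (cases "admissible x = {}")
    case False
    then obtain v where "v \<in> admissible x"
      by auto
    then show ?thesis
      using \<phi>_eq admissible_transport by metis
  next
    case True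
    have "admissible (G t x) = {}"
    proof (rule ccontr)
      assume "admissible (G t x) \<noteq> {}"
      then obtain w where "w \<in> admissible (G t x)"
        by auto
      from admissible_transport[OF this, of "- t"] True show False
        by (auto simp: G_add G_0)
    qed
    with True show ?thesis
      by (simp add: \<phi>_def A_fixes_0)
  qed
  moreover have "AE x in M. \<phi> x = f x"
    using f_equivariant by eventually_elim (simp add: \<phi>_eq admissible_def)
  ultimately show ?thesis
    by blast
qed

theorem lemma2p1:
  fixes E :: "real^'m^'m" and H :: "real^'n^'n" and h :: "real^'m \<Rightarrow> complex^'n^'n"
  assumes eig: "\<And>l. is_eigenvalue E l \<Longrightarrow> Re l > 0"
    and meas: "h \<in> borel_measurable lebesgue"
    and hom: "\<And>c. c > 0 \<Longrightarrow>
      (AE x in lebesgue. h (mat_cpow c E *v x) =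
         cmat (mat_cpow c ((1/2) *\<^sub>R H)) ** h x ** cmat (mat_cpow c ((1/2) *\<^sub>R transpose H)))"
  shows "\<exists>\<phi>. EH_homogeneous E H \<phi> \<and> (AE x in lebesgue. \<phi> x = h x)"
proof -
  define G where "G t x = mat_exp E t *v x" for t x
  define A where "A = two_sided_mat_exp ((1/2) *\<^sub>R H) ((1/2) *\<^sub>R transpose H)"
  obtain h' where h'_meas: "h' \<in> borel_measurable borel" and h_h': "AE x in lborel. h x = h' x"
    using completion_ex_borel_measurable_euclidean[OF meas] by auto
  have "AE x in lborel. h' (G t x) = A t (h' x)" for t
    unfolding G_def
  proof (rule AE_lborel_linear_equivariance_transfer[OF mat_exp_minus_mult h_h'])
    show "AE x in lebesgue. h (mat_exp E t *v x) = A t (h x)"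
      using hom[of "exp t"] by (simp add: A_def two_sided_mat_exp_def mat_cpow_eq_mat_exp)
  qed
  then have "AE x in lborel. AE t in lborel. h' (G t x) = A t (h' x)"
    by (intro AE_lborel_AE_equivariant h'_meas borel_measurable_continuous_onI)
       (simp_all add: G_def A_def continuous_on_mat_exp_mult_vec continuous_on_two_sided_mat_exp)
  then obtain \<phi> where \<phi>_equivariant: "\<forall>t x. \<phi> (G t x) = A t (\<phi> x)"
    and \<phi>_h': "AE x in lborel. \<phi> x = h' x"
    using equivariant_version_of_AE_equivariant[where G = G and A = A and f = h' and M = lborel]
    by (auto simp: G_def A_def matrix_vector_mul_assoc mat_exp_add mat_exp_0
        two_sided_mat_exp_add two_sided_mat_exp_0 two_sided_mat_exp_zero)
  have "EH_homogeneous E H \<phi>"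
    using \<phi>_equivariant
    by (simp add: EH_homogeneous_def G_def A_def two_sided_mat_exp_def mat_cpow_eq_mat_exp)
  moreover have "AE x in lebesgue. \<phi> x = h x"
    using AE_completion[OF \<phi>_h'] AE_completion[OF h_h'] by eventually_elim simp
  ultimately show ?thesis
    by blast
qed

end
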